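(* Let $R$ be a commutative u-ring and let $n\ge 1$ be an integer. Then every $n$-absorbing ideal of $R$ is strongly $n$-absorbing.
   Context: All rings are commutative with identity $1\neq 0$. An ideal $I$ of $R$ is $n$-absorbing if whenever $x_1,\dots,x_{n+1}\in R$ and $x_1x_2\cdots x_{n+1}\in I$, the product of some $n$ of the $x_i$'s lies in $I$. An ideal $I$ of $R$ is strongly $n$-absorbing if whenever $I_1,\dots,I_{n+1}$ are ideals of $R$ with $I_1I_2\cdots I_{n+1}\subseteq I$, the product of some $n$ of the $I_j$'s is contained in $I$. An ideal $I$ of $R$ is a u-ideal if whenever $I\subseteq I_1\cup\cdots\cup I_m$ for finitely many ideals $I_1,\dots,I_m$ of $R$, then $I\subseteq I_j$ for some $j$. A ring $R$ is a u-ring if every ideal of $R$ is a u-ideal. *)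

theory Defs
  imports "HOL-Algebra.Ideal_Product" "HOL-Algebra.FiniteProduct"
begin

fun ideal_list_prod :: "('a, 'b) ring_scheme \<Rightarrow> 'a set list \<Rightarrow> 'a set" where
  "ideal_list_prod R [] = carrier R"
| "ideal_list_prod R (I # Is) = ideal_prod R I (ideal_list_prod R Is)"

definition ideal_setprod :: "('a, 'b) ring_scheme \<Rightarrow> (nat \<Rightarrow> 'a set) \<Rightarrow> nat set \<Rightarrow> 'a set" where
  "ideal_setprod R I A = ideal_list_prod R (map I (sorted_list_of_set A))"

definition n_absorbing :: "('a, 'b) ring_scheme \<Rightarrow> nat \<Rightarrow> 'a set \<Rightarrow> bool" where
  "n_absorbing R n I \<longleftrightarrow> ideal I R \<and>
     (\<forall>x. (\<forall>i\<le>n. x i \<in> carrier R) \<longrightarrow> finprod R x {0..n} \<in> I \<longrightarrow>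
        (\<exists>j\<le>n. finprod R x ({0..n} - {j}) \<in> I))"

definition strongly_n_absorbing :: "('a, 'b) ring_scheme \<Rightarrow> nat \<Rightarrow> 'a set \<Rightarrow> bool" where
  "strongly_n_absorbing R n I \<longleftrightarrow> ideal I R \<and>
     (\<forall>J. (\<forall>i\<le>n. ideal (J i) R) \<longrightarrow> ideal_setprod R J {0..n} \<subseteq> I \<longrightarrow>
        (\<exists>j\<le>n. ideal_setprod R J ({0..n} - {j}) \<subseteq> I))"

definition u_ideal :: "('a, 'b) ring_scheme \<Rightarrow> 'a set \<Rightarrow> bool" where
  "u_ideal R I \<longleftrightarrow> ideal I R \<and>
     (\<forall>S. finite S \<longrightarrow> (\<forall>J\<in>S. ideal J R) \<longrightarrow> I \<subseteq> \<Union>S \<longrightarrow> (\<exists>J\<in>S. I \<subseteq> J))"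

definition u_ring :: "('a, 'b) ring_scheme \<Rightarrow> bool" where
  "u_ring R \<longleftrightarrow> (\<forall>I. ideal I R \<longrightarrow> u_ideal R I)"

end

(*
  A product of ideals J_0 ... J_m lies in an ideal K iff every product x_0 ... x_m with
  x_i \<in> J_i does; passing through the quotient ideals (K : J_0) this reduces to one factor
  at a time. So it suffices to replace the elements of an n-absorbing relation by ideals one
  position at a time. Suppose J_k is an ideal, the positions treated so far carry ideals and
  the others singletons. If the product omitting J_k is not in I, then for each a \<in> J_k the
  previous stage, applied with J_k replaced by {a}, yields j \<noteq> k such that a lies in the
  quotient ideal (I : P_j), P_j the products omitting positions j and k. Hence J_k is covered
  by the n ideals (I : P_j), and since J_k is a u-ideal it lies in one of them, which says
  exactly that the product omitting J_j lies in I.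
*)
theory Submission
  imports Defs
begin

definition choice_prods :: "('a, 'b) ring_scheme \<Rightarrow> (nat \<Rightarrow> 'a set) \<Rightarrow> nat set \<Rightarrow> 'a set" where
  "choice_prods R J B = {finprod R x B | x. \<forall>i\<in>B. x i \<in> J i}"

definition ideal_quotient :: "('a, 'b) ring_scheme \<Rightarrow> 'a set \<Rightarrow> 'a set \<Rightarrow> 'a set" where
  "ideal_quotient R K P = {b \<in> carrier R. \<forall>p\<in>P. b \<otimes>\<^bsub>R\<^esub> p \<in> K}"

lemma choice_prods_mono:
  assumes "\<forall>i\<in>B. J' i \<subseteq> J i"
  shows "choice_prods R J' B \<subseteq> choice_prods R J B"
  using assms unfolding choice_prods_def by blast

lemma choice_prods_cong:
  assumes "\<forall>i\<in>B. J' i = J i"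
  shows "choice_prods R J' B = choice_prods R J B"
  using assms by (simp add: subset_antisym choice_prods_mono)

lemma ideal_setprod_insert:
  assumes "finite A" "\<forall>a\<in>A. b < a"
  shows "ideal_setprod R J (insert b A) = J b \<cdot>\<^bsub>R\<^esub> ideal_setprod R J A"
proof -
  have "Min (insert b A) = b" using assms by (auto intro!: Min_eqI simp: less_imp_le)
  moreover have "insert b A - {b} = A" using assms by auto
  ultimately show ?thesis
    using sorted_list_of_set_nonempty[of "insert b A"] assms by (simp add: ideal_setprod_def)
qed

lemma u_ideal_subset_of_finite_cover:
  assumes "u_ideal R L" "finite A" "\<forall>j\<in>A. ideal (F j) R" "L \<subseteq> (\<Union>j\<in>A. F j)"
  shows "\<exists>j\<in>A. L \<subseteq> F j"
proof -
  have "finite (F ` A) \<longrightarrow> (\<forall>J\<in>F ` A. ideal J R) \<longrightarrow> L \<subseteq> \<Union>(F ` A) \<longrightarrow> (\<exists>J\<in>F ` A. L \<subseteq> J)"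
    using assms(1) unfolding u_ideal_def by blast
  then show ?thesis
    using assms(2-4) by simp
qed

context cring
begin

lemma ideal_quotient_is_ideal:
  assumes K: "ideal K R" and P: "P \<subseteq> carrier R"
  shows "ideal (ideal_quotient R K P) R"
proof -
  interpret K: ideal K R by (fact K)
  show ?thesis
  proof (rule idealI)
    show "ring R" by (rule ring_axioms)
    show "subgroup (ideal_quotient R K P) (add_monoid R)"
    proof (rule add.subgroupI)
      show "ideal_quotient R K P \<subseteq> carrier R"
        unfolding ideal_quotient_def by blast
      show "ideal_quotient R K P \<noteq> {}"
        using P unfolding ideal_quotient_def by (auto simp: subsetD intro!: exI[of _ \<zero>])
    next
      fix a assume "a \<in> ideal_quotient R K P"
      then show "\<ominus> a \<in> ideal_quotient R K P"
        using P unfolding ideal_quotient_def by (auto simp: l_minus subsetD)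
    next
      fix a b assume "a \<in> ideal_quotient R K P" "b \<in> ideal_quotient R K P"
      then show "a \<oplus> b \<in> ideal_quotient R K P"
        using P unfolding ideal_quotient_def by (auto simp: l_distr subsetD)
    qed
  next
    fix a x assume a: "a \<in> ideal_quotient R K P" and x: "x \<in> carrier R"
    then show "x \<otimes> a \<in> ideal_quotient R K P"
      using P unfolding ideal_quotient_def by (auto simp: m_assoc subsetD K.I_l_closed)
    then show "a \<otimes> x \<in> ideal_quotient R K P"
      using a x unfolding ideal_quotient_def by (simp add: m_comm)
  qed
qed

lemma set_mult_subset_iff_left:
  "P <#> Q \<subseteq> K \<longleftrightarrow> P \<subseteq> ideal_quotient R K Q" if "P \<subseteq> carrier R"
  using that unfolding set_mult_def ideal_quotient_def by blast

lemma set_mult_subset_iff_right: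
  "P <#> Q \<subseteq> K \<longleftrightarrow> Q \<subseteq> ideal_quotient R K P" if "P \<subseteq> carrier R" "Q \<subseteq> carrier R"
  using that unfolding set_mult_def ideal_quotient_def by (auto simp: subset_iff) (metis m_comm)+

lemma ideal_prod_subset_iff:
  assumes "ideal I R" "ideal J R" "ideal K R"
  shows "I \<cdot> J \<subseteq> K \<longleftrightarrow> I <#> J \<subseteq> K"
proof -
  have "I <#> J \<subseteq> I \<cdot> J"
    using genideal_self[OF set_mult_closed] ideal.Icarr assms(1,2)
    by (metis ideal_prod_eq_genideal subsetI)
  then show ?thesis
    using genideal_minimal[OF assms(3)] by (auto simp: ideal_prod_eq_genideal assms(1,2))
qed

lemma choice_prods_closed:
  assumes "\<forall>i\<in>B. J i \<subseteq> carrier R"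
  shows "choice_prods R J B \<subseteq> carrier R"
  using assms unfolding choice_prods_def by (auto intro!: finprod_closed)

lemma choice_prods_insert:
  assumes "finite B" "k \<notin> B" and carr: "\<forall>i\<in>insert k B. J i \<subseteq> carrier R"
  shows "choice_prods R J (insert k B) = J k <#> choice_prods R J B"
proof (intro equalityI subsetI)
  fix y assume "y \<in> choice_prods R J (insert k B)"
  then obtain x where x: "\<forall>i\<in>insert k B. x i \<in> J i" "y = finprod R x (insert k B)"
    unfolding choice_prods_def by blast
  then have "y = x k \<otimes> finprod R x B"
    using assms by (auto intro!: finprod_insert)
  moreover have "finprod R x B \<in> choice_prods R J B"
    using x unfolding choice_prods_def by auto
  ultimately show "y \<in> J k <#> choice_prods R J B"
    using x unfolding set_mult_def by auto
next
  fix y assume "y \<in> J k <#> choice_prods R J B"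
  then obtain a x where a: "a \<in> J k" and x: "\<forall>i\<in>B. x i \<in> J i"
    and y: "y = a \<otimes> finprod R x B"
    unfolding set_mult_def choice_prods_def by blast
  have xa: "x(k := a) \<in> B \<rightarrow> carrier R"
    using carr x assms(2) by auto
  have "finprod R x B = finprod R (x(k := a)) B"
    using assms(2) xa by (intro finprod_cong') auto
  then have "y = a \<otimes> finprod R (x(k := a)) B"
    using y by simp
  also have "\<dots> = finprod R (x(k := a)) (insert k B)"
    using finprod_insert[OF assms(1,2) xa] carr a by auto
  finally have "y = finprod R (x(k := a)) (insert k B)" .
  moreover have "\<forall>i\<in>insert k B. (x(k := a)) i \<in> J i"
    using a x assms(2) by auto
  ultimately show "y \<in> choice_prods R J (insert k B)"
    unfolding choice_prods_def by blast
qed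

lemma choice_prods_singletons:
  assumes "\<forall>i\<in>B. c i \<in> carrier R \<and> J i = {c i}"
  shows "choice_prods R J B = {finprod R c B}"
  using assms unfolding choice_prods_def by (auto intro!: finprod_cong')

lemma choice_prods_remove:
  assumes "finite B" "k \<in> B" "\<forall>i\<in>B. J i \<subseteq> carrier R"
  shows "choice_prods R J B = J k <#> choice_prods R J (B - {k})"
  using assms choice_prods_insert[of "B - {k}" k J] by (simp add: insert_absorb)

lemma choice_prods_update_subset_iff:
  assumes "finite B" "k \<in> B" "\<forall>i\<in>B - {k}. J i \<subseteq> carrier R" "a \<in> carrier R"
  shows "choice_prods R (J(k := {a})) B \<subseteq> K \<longleftrightarrow>
    a \<in> ideal_quotient R K (choice_prods R J (B - {k}))"
proof -
  have "\<forall>i\<in>B. (J(k := {a})) i \<subseteq> carrier R"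
    using assms by auto
  then have "choice_prods R (J(k := {a})) B = {a} <#> choice_prods R (J(k := {a})) (B - {k})"
    using choice_prods_remove[OF assms(1,2)] by simp
  also have "choice_prods R (J(k := {a})) (B - {k}) = choice_prods R J (B - {k})"
    by (rule choice_prods_cong) simp
  finally have eq: "choice_prods R (J(k := {a})) B = {a} <#> choice_prods R J (B - {k})" .
  show ?thesis
    unfolding eq using set_mult_subset_iff_left[of "{a}" _ K] assms(4) by simp
qed

lemma ideal_setprod_is_ideal:
  assumes "finite A" "\<forall>i\<in>A. ideal (J i) R"
  shows "ideal (ideal_setprod R J A) R"
  using assms
proof (induction A rule: finite_linorder_min_induct)
  case empty
  then show ?case by (simp add: ideal_setprod_def oneideal)
next
  case (insert b A)
  then show ?case by (simp add: ideal_setprod_insert ideal_prod_is_ideal)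
qed

lemma ideal_setprod_subset_iff:
  assumes "finite A" "\<forall>i\<in>A. ideal (J i) R" "ideal K R"
  shows "ideal_setprod R J A \<subseteq> K \<longleftrightarrow> choice_prods R J A \<subseteq> K"
  using assms
proof (induction A arbitrary: K rule: finite_linorder_min_induct)
  case empty
  have "choice_prods R J {} = {\<one>}"
    by (simp add: choice_prods_def)
  then show ?case
    using ideal.one_imp_carrier[OF empty(2)] by (auto simp: ideal_setprod_def)
next
  case (insert b A)
  have carr: "\<forall>i\<in>insert b A. J i \<subseteq> carrier R"
    using insert.prems(1) by (auto intro: ideal.Icarr)
  have Jb: "ideal (J b) R" and P: "ideal (ideal_setprod R J A) R"
    using insert ideal_setprod_is_ideal by auto
  have "ideal_setprod R J (insert b A) \<subseteq> K \<longleftrightarrow> J b <#> ideal_setprod R J A \<subseteq> K"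
    using ideal_prod_subset_iff[OF Jb P insert.prems(2)] ideal_setprod_insert[of A b R J, OF insert.hyps]
    by simp
  also have "\<dots> \<longleftrightarrow> ideal_setprod R J A \<subseteq> ideal_quotient R K (J b)"
    using carr P by (intro set_mult_subset_iff_right) (auto intro: ideal.Icarr)
  also have "\<dots> \<longleftrightarrow> choice_prods R J A \<subseteq> ideal_quotient R K (J b)"
    using insert carr by (simp add: ideal_quotient_is_ideal)
  also have "\<dots> \<longleftrightarrow> J b <#> choice_prods R J A \<subseteq> K"
    using carr by (intro set_mult_subset_iff_right[symmetric] choice_prods_closed) auto
  also have "\<dots> \<longleftrightarrow> choice_prods R J (insert b A) \<subseteq> K"
    using choice_prods_insert[OF insert.hyps(1) _ carr] insert.hyps(2) by blast
  finally show ?case .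
qed

lemma choice_prods_omit_subset_of_pointwise:
  assumes I: "ideal I R" and u: "u_ideal R (J k)" and k: "k \<le> n"
    and carr: "\<forall>i\<le>n. J i \<subseteq> carrier R"
    and pointwise: "\<forall>a\<in>J k. \<exists>j\<le>n. choice_prods R (J(k := {a})) ({0..n} - {j}) \<subseteq> I"
  shows "\<exists>j\<le>n. choice_prods R J ({0..n} - {j}) \<subseteq> I"
proof (cases "choice_prods R J ({0..n} - {k}) \<subseteq> I")
  case True
  then show ?thesis using k by blast
next
  case False
  let ?B = "\<lambda>j. {0..n} - {j}"
  define Q where "Q j = ideal_quotient R I (choice_prods R J (?B j - {k}))" for j
  have cover: "J k \<subseteq> (\<Union>j\<in>?B k. Q j)"
  proof
    fix a assume a: "a \<in> J k"
    then obtain j where j: "j \<le> n" "choice_prods R (J(k := {a})) (?B j) \<subseteq> I"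
      using pointwise by blast
    have "j \<noteq> k"
    proof
      assume "j = k"
      then have "choice_prods R J (?B k) \<subseteq> I"
        using j(2) choice_prods_cong[of "?B k" "J(k := {a})" J R] by simp
      with False show False ..
    qed
    then have "a \<in> Q j"
      using j(2) choice_prods_update_subset_iff[of "?B j" k J a I] a carr k
      unfolding Q_def by auto
    then show "a \<in> (\<Union>j\<in>?B k. Q j)"
      using j(1) \<open>j \<noteq> k\<close> by auto
  qed
  have "\<forall>j\<in>?B k. ideal (Q j) R"
    using I carr unfolding Q_def by (auto intro!: ideal_quotient_is_ideal choice_prods_closed)
  then have "\<exists>j\<in>?B k. J k \<subseteq> Q j"
    using u cover by (intro u_ideal_subset_of_finite_cover) auto
  then obtain j where j: "j \<in> ?B k" "J k \<subseteq> Q j"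
    by blast
  have "J k <#> choice_prods R J (?B j - {k}) \<subseteq> I"
    using j(2) set_mult_subset_iff_left[of "J k" _ I] carr k unfolding Q_def by auto
  then have "choice_prods R J (?B j) \<subseteq> I"
    using choice_prods_remove[of "?B j" k J] j(1) carr k by auto
  then show ?thesis using j by auto
qed

lemma n_absorbing_choice_prods:
  assumes I: "n_absorbing R n I" and ur: "u_ring R"
    and Ks: "Ks \<subseteq> {0..n}" "\<forall>i\<in>Ks. ideal (J i) R"
    and singletons: "\<forall>i\<in>{0..n} - Ks. c i \<in> carrier R \<and> J i = {c i}"
    and prods: "choice_prods R J {0..n} \<subseteq> I"
  shows "\<exists>j\<le>n. choice_prods R J ({0..n} - {j}) \<subseteq> I"
  using finite_subset[OF Ks(1) finite_atLeastAtMost] Ks singletons prods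
proof (induction Ks arbitrary: J c rule: finite_subset_induct')
  case empty
  have "finprod R c {0..n} \<in> I"
    using empty.prems choice_prods_singletons[of "{0..n}" c J] by simp
  moreover have "\<forall>i\<le>n. c i \<in> carrier R"
    using empty.prems(2) by auto
  ultimately obtain j where "j \<le> n" "finprod R c ({0..n} - {j}) \<in> I"
    using I unfolding n_absorbing_def by blast
  then show ?case
    using empty.prems(2) choice_prods_singletons[of "{0..n} - {j}" c J] by auto
next
  case (insert k Ks)
  have k: "k \<le> n" and Jk: "ideal (J k) R"
    using insert by auto
  have carr: "\<forall>i\<le>n. J i \<subseteq> carrier R"
  proof (intro allI impI)
    fix i assume "i \<le> n"
    then show "J i \<subseteq> carrier R"
      using insert.prems(1,2) Jk by (cases "i \<in> insert k Ks") (auto intro: ideal.Icarr)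
  qed
  have "\<exists>j\<le>n. choice_prods R (J(k := {a})) ({0..n} - {j}) \<subseteq> I" if a: "a \<in> J k" for a
  proof (rule insert.IH)
    show "\<forall>i\<in>Ks. ideal ((J(k := {a})) i) R"
      using insert.prems(1) insert.hyps by auto
    show "\<forall>i\<in>{0..n} - Ks. (c(k := a)) i \<in> carrier R \<and> (J(k := {a})) i = {(c(k := a)) i}"
      using insert.prems(2) a carr k by auto
    have "choice_prods R (J(k := {a})) {0..n} \<subseteq> choice_prods R J {0..n}"
      using a by (intro choice_prods_mono) auto
    then show "choice_prods R (J(k := {a})) {0..n} \<subseteq> I"
      using insert.prems(3) by (rule order_trans)
  qed
  moreover have "u_ideal R (J k)"
    using ur Jk unfolding u_ring_def by blast
  ultimately show ?case
    using choice_prods_omit_subset_of_pointwise[of I J k n] I k carr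
    unfolding n_absorbing_def by blast
qed

end

theorem theorem2:
  fixes R :: "('a, 'b) ring_scheme" and n :: nat and I :: "'a set"
  assumes "cring R" and "\<one>\<^bsub>R\<^esub> \<noteq> \<zero>\<^bsub>R\<^esub>"
    and "u_ring R" and "n \<ge> 1"
    and "n_absorbing R n I"
  shows "strongly_n_absorbing R n I"
proof -
  interpret cring R by fact
  have I: "ideal I R"
    using assms(5) unfolding n_absorbing_def by blast
  show ?thesis
    unfolding strongly_n_absorbing_def
  proof (intro conjI allI impI I)
    fix J assume J: "\<forall>i\<le>n. ideal (J i) R" and prod: "ideal_setprod R J {0..n} \<subseteq> I"
    have "choice_prods R J {0..n} \<subseteq> I"
      using prod ideal_setprod_subset_iff[of "{0..n}" J I] J I by auto
    then obtain j where "j \<le> n" "choice_prods R J ({0..n} - {j}) \<subseteq> I"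
      using n_absorbing_choice_prods[OF assms(5,3), of "{0..n}" J] J by auto
    then show "\<exists>j\<le>n. ideal_setprod R J ({0..n} - {j}) \<subseteq> I"
      using ideal_setprod_subset_iff[of "{0..n} - {j}" J I] J I by auto
  qed
qed

end
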